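(* Let $p$ be an odd prime, $n\ge1$, $G=\mu_{p^n}$ and let $\mathcal{P}$ be a unital partition of $G$ such that $|A|$ is a power of $p$ for every $A\in\mathcal{P}$ (condition (p)). Then $\mathcal{P}_i\cap\mathcal{P}_j=\emptyset$ for all $i\neq j$ in $\{0,\dots,n\}$, i.e. $\mathcal{P}=\bigsqcup_k\mathcal{P}_k$. Moreover, for each $0\le k\le n-1$ one has $u_k=\phi(p^{b_k})$ for some integer $b_k$ with $1\le b_k\le n-k$.
   Context: A unital partition of a finite commutative group $G$ is a partition $G=\{1\}\sqcup A_0\sqcup\dots\sqcup A_s$ such that, with $a_i=\sum_{x\in A_i}x\in\mathbb{Z}[G]$, the $\mathbb{Z}$-span of $1$ and the $a_i$ is closed under multiplication in $\mathbb{Z}[G]$. $B_k=\{x^{p^k}\mid x\text{ a generator of }G\}$, $\mathcal{P}_k=\{A\in\mathcal{P}\mid A\cap B_k\neq\emptyset\}$. Fix an integer $\alpha$ generating $(\mathbb{Z}/p^n\mathbb{Z})^\times$; for $A\in\mathcal{P}_k$ and $y\in A\cap B_k$, $u_k$ is the smallest positive integer with $y^{\alpha^{u_k}}\in A$ (independent of the choices of $A$, $y$). $\phi$ is Euler's function. *)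

theory Defs
  imports "HOL-Number_Theory.Number_Theory"
begin

text \<open>The cyclic group mu_N (N = p^n) is modelled additively as the residues
  {0..<N}: the element x stands for zeta^x, the identity 1 is 0, x^m is (m*x) mod N.
  Elements of the group ring Z[G] are functions nat => int vanishing outside {0..<N}.\<close>

definition grp :: "nat \<Rightarrow> nat set" where
  "grp N = {0..<N}"

definition gr_mult :: "nat \<Rightarrow> (nat \<Rightarrow> int) \<Rightarrow> (nat \<Rightarrow> int) \<Rightarrow> nat \<Rightarrow> int" where
  "gr_mult N f g = (\<lambda>x. if x < N then (\<Sum>y<N. f y * g ((x + N - y) mod N)) else 0)"

definition ind :: "nat set \<Rightarrow> nat \<Rightarrow> int" where
  "ind A = (\<lambda>x. if x \<in> A then 1 else 0)"

definition zspan :: "(nat \<Rightarrow> int) set \<Rightarrow> (nat \<Rightarrow> int) set" where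
  "zspan S = {f. \<exists>c. f = (\<lambda>x. \<Sum>v\<in>S. c v * v x)}"

text \<open>A unital partition, recorded as the set of all blocks including the block {1}
  (here {0}); the span of 1 = ind {0} and the block sums a_i = ind A_i must be
  closed under multiplication.\<close>
definition unital_partition :: "nat \<Rightarrow> nat set set \<Rightarrow> bool" where
  "unital_partition N P \<longleftrightarrow>
     {0} \<in> P \<and> (\<forall>A\<in>P. A \<noteq> {} \<and> A \<subseteq> grp N) \<and> \<Union>P = grp N \<and>
     (\<forall>A\<in>P. \<forall>B\<in>P. A \<noteq> B \<longrightarrow> A \<inter> B = {}) \<and>
     (\<forall>f\<in>zspan (ind ` P). \<forall>g\<in>zspan (ind ` P). gr_mult N f g \<in> zspan (ind ` P))"

definition generators :: "nat \<Rightarrow> nat set" where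
  "generators N = {x \<in> grp N. coprime x N}"

definition Bset :: "nat \<Rightarrow> nat \<Rightarrow> nat \<Rightarrow> nat set" where
  "Bset p N k = (\<lambda>x. (p ^ k * x) mod N) ` generators N"

definition Pk :: "nat \<Rightarrow> nat \<Rightarrow> nat set set \<Rightarrow> nat \<Rightarrow> nat set set" where
  "Pk p N P k = {A \<in> P. A \<inter> Bset p N k \<noteq> {}}"

definition uexp :: "nat \<Rightarrow> nat \<Rightarrow> nat set \<Rightarrow> nat \<Rightarrow> nat" where
  "uexp N \<alpha> A y = (LEAST u. u > 0 \<and> (\<alpha> ^ u * y) mod N \<in> A)"

end

theory Submission
  imports Defs
begin

text \<open>
  (1) A necklace congruence: a finite set of lists of prime length q, closed under
      rotation, has as many elements as rotation-fixed lists, modulo q.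
  (2) Schur's multiplier theorem for unital partitions: counting q-tuples of a block A
      shows that the q-th power of its block sum is, modulo a prime q, the indicator
      of q \<cdot> A; since the span is closed under products, q \<cdot> A is a union of blocks.
      Factoring units into primes and using the inverse unit, m \<cdot> A is a block for
      every unit m.
  (3) The layers B_k = p^k \<cdot> G^\<times> partition G, have \<phi>(p^(n-k)) elements, and units
      act transitively on each of them.
  (4) Powers of the primitive root \<alpha> permute the blocks; the orbit of a block A
      consists of period(A) disjoint blocks of size |A| and equals the union of the
      layers A meets.  Hence period(A) \<cdot> |A| is a sum of totients \<phi>(p^(n-k)).
  (5) Elementary arithmetic with |A| = p^e and period(A) dividing \<phi>(p^n) shows that
      this sum has only one term, and then period(A) = \<phi>(p^(n-k-e)).
  The main theorem follows since u_k is the period of any block meeting B_k.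
\<close>

lemma inj_rotate: "inj (rotate n)"
  by (simp add: rotate_def inj_rotate1)

lemma rotate_add_mult_length: "rotate (i + length xs * j) xs = rotate i xs"
  by (metis rotate_conv_mod mod_mult_self2)

lemma rotate_fixed_cancel:
  assumes "rotate k (rotate i xs) = rotate i xs"
  shows "rotate k xs = xs"
proof -
  have "rotate i (rotate k xs) = rotate i xs"
    using assms by (simp add: rotate_rotate add.commute)
  thus ?thesis using inj_rotate by (auto dest: injD)
qed

lemma rotate_fixed_by_coprime_shift:
  assumes fixed: "rotate d xs = xs" and cop: "coprime d (length xs)"
  shows "rotate1 xs = xs"
proof -
  have fixed_mult: "rotate (d * k) xs = xs" for k
    by (induction k) (simp_all add: rotate_rotate[symmetric] fixed)
  obtain k where "[d * k = Suc 0] (mod length xs)"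
    using cong_solve_coprime_nat[OF cop] by blast
  hence "rotate (d * k) xs = rotate 1 xs"
    unfolding cong_def by (metis One_nat_def rotate_conv_mod)
  thus ?thesis using fixed_mult by simp
qed

definition rot_orbit :: "'a list \<Rightarrow> 'a list set" where
  "rot_orbit xs = range (\<lambda>i. rotate i xs)"

lemma self_in_rot_orbit: "xs \<in> rot_orbit xs"
  unfolding rot_orbit_def by (metis rangeI rotate0 id_apply)

lemma rot_orbit_rotate: "rot_orbit (rotate j xs) = rot_orbit xs"
proof -
  have "rotate i xs = rotate (i + (length xs - 1) * j) (rotate j xs)" for i
  proof (cases xs)
    case (Cons a as)
    have len: "i + (length xs - 1) * j + j = i + length xs * j"
      using Cons by (simp add: algebra_simps)
    have "rotate (i + (length xs - 1) * j) (rotate j xs) = rotate (i + length xs * j) xs"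
      by (simp only: rotate_rotate len)
    thus ?thesis by (simp only: rotate_add_mult_length)
  qed simp
  thus ?thesis unfolding rot_orbit_def by (auto simp: rotate_rotate)
qed

lemma rot_orbit_eqI:
  assumes "ys \<in> rot_orbit xs"
  shows "rot_orbit ys = rot_orbit xs"
proof -
  obtain j where "ys = rotate j xs" using assms unfolding rot_orbit_def by blast
  thus ?thesis by (simp add: rot_orbit_rotate)
qed

lemma card_rot_orbit_prime:
  assumes q: "prime (length xs)" and nfix: "rotate1 xs \<noteq> xs"
  shows "card (rot_orbit xs) = length xs"
proof -
  let ?q = "length xs"
  have "rot_orbit xs = (\<lambda>i. rotate i xs) ` {..<?q}"
    unfolding rot_orbit_def using prime_gt_0_nat[OF q]
    by (auto simp: image_iff intro: rotate_conv_mod)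
  moreover have "inj_on (\<lambda>i. rotate i xs) {..<?q}"
  proof (rule linorder_inj_onI')
    fix i j assume "i \<in> {..<?q}" "j \<in> {..<?q}" "i < j"
    hence ij: "0 < j - i" "j - i < ?q" by auto
    show "rotate i xs \<noteq> rotate j xs"
    proof
      assume eq: "rotate i xs = rotate j xs"
      have "rotate (j - i) (rotate i xs) = rotate j xs"
        using ij by (simp add: rotate_rotate)
      hence "rotate (j - i) xs = xs" unfolding eq[symmetric] by (rule rotate_fixed_cancel)
      moreover have "coprime (j - i) ?q"
        using q ij by (metis coprime_commute prime_imp_coprime_nat dvd_imp_le not_le)
      ultimately show False using rotate_fixed_by_coprime_shift nfix by blast
    qed
  qed
  ultimately show ?thesis by (simp add: card_image)
qed

lemma sum_list_rotate1: "sum_list (rotate1 xs) = sum_list (xs :: 'a :: comm_monoid_add list)"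
  by (cases xs) (simp_all add: add.commute)

lemma rotate1_fixed_replicate:
  assumes "rotate1 xs = xs"
  shows "xs = replicate (length xs) (hd xs)"
proof (cases xs)
  case (Cons a as)
  hence "card (set xs) = 1" using rotate1_fixpoint_card[OF assms] by simp
  then obtain b where "set xs = {b}" by (metis card_1_singletonE)
  moreover have "hd xs \<in> set xs" using Cons by simp
  ultimately show ?thesis by (simp add: replicate_length_same)
qed simp

text \<open>The non-fixed lists split into rotation orbits of size q.\<close>

theorem necklace_congruence:
  assumes q: "prime q" and fin: "finite X" and len: "\<forall>xs\<in>X. length xs = q"
    and closed: "\<forall>xs\<in>X. rotate1 xs \<in> X"
  shows "card X mod q = card {xs\<in>X. rotate1 xs = xs} mod q"
proof -
  define F where "F = {xs\<in>X. rotate1 xs = xs}"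
  define Y where "Y = X - F"
  have rotate_in_X: "rotate i xs \<in> X" if "xs \<in> X" for i xs
    using that closed by (induction i) auto
  have orbit_in_Y: "rot_orbit xs \<subseteq> Y" if xs: "xs \<in> Y" for xs
  proof
    fix ys assume "ys \<in> rot_orbit xs"
    then obtain i where ys: "ys = rotate i xs" unfolding rot_orbit_def by blast
    have "rotate1 ys \<noteq> ys"
    proof
      assume "rotate1 ys = ys"
      hence "rotate 1 (rotate i xs) = rotate i xs" using ys by simp
      hence "rotate 1 xs = xs" by (rule rotate_fixed_cancel)
      thus False using xs unfolding Y_def F_def by simp
    qed
    thus "ys \<in> Y" using ys rotate_in_X xs unfolding Y_def F_def by blast
  qed
  define C where "C = rot_orbit ` Y"
  have "q * card C = card (\<Union>C)"
  proof (rule card_partition)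
    show "finite C" "finite (\<Union>C)"
      using fin orbit_in_Y unfolding C_def Y_def by (auto intro: finite_subset)
    show "card c = q" if c: "c \<in> C" for c
    proof -
      obtain xs where "xs \<in> X" "rotate1 xs \<noteq> xs" "c = rot_orbit xs"
        using c unfolding C_def Y_def F_def by blast
      thus ?thesis using len card_rot_orbit_prime q by metis
    qed
    show "c1 \<inter> c2 = {}" if c: "c1 \<in> C" "c2 \<in> C" "c1 \<noteq> c2" for c1 c2
      using c rot_orbit_eqI unfolding C_def by blast
  qed
  moreover have "\<Union>C = Y" using orbit_in_Y self_in_rot_orbit unfolding C_def by blast
  moreover have "card X = card Y + card F"
  proof -
    have "F \<subseteq> X" unfolding F_def by blast
    thus ?thesis using fin unfolding Y_def
      by (simp add: card_Diff_subset card_mono finite_subset)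
  qed
  ultimately have "card X = card F + q * card C" by simp
  thus ?thesis unfolding F_def by simp
qed

lemma unit_inverse:
  fixes a m :: nat
  assumes "coprime a m"
  obtains b where "[a * b = 1] (mod m)" and "coprime b m"
proof -
  obtain b where inv: "[a * b = 1] (mod m)" using cong_solve_coprime_nat[OF assms] by auto
  have "coprime (a * b) m" using cong_imp_coprime[OF cong_sym[OF inv]] by simp
  thus ?thesis using inv that by simp
qed

lemma coprime_one_plus_mult: "coprime (1 + p * t) (p :: nat)"
proof -
  have "coprime p (t * p + 1)" unfolding coprime_iff_gcd_eq_1 gcd_add_mult by simp
  thus ?thesis by (metis add.commute mult.commute coprime_commute)
qed

lemma coprime_prime_pred: "prime (p :: nat) \<Longrightarrow> coprime (p ^ e) (p - 1)"
  using coprime_Suc_left_nat[of "p - 1"] prime_gt_0_nat[of p] by simp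

lemma totient_prime_power_cofactor:
  fixes p m r e :: nat
  assumes p: "prime p" and m: "m \<ge> 1" and eq: "r * p ^ e = totient (p ^ m)"
  shows "e < m \<and> r = totient (p ^ (m - e))"
proof -
  have p1: "p > 1" using p prime_gt_1_nat by blast
  have tot: "totient (p ^ m) = (p - 1) * p ^ (m - 1)"
    using totient_prime_power[OF p] m by simp
  have "p ^ e dvd (p - 1) * p ^ (m - 1)" using eq tot by (metis dvd_triv_right)
  hence "p ^ e dvd p ^ (m - 1)" using coprime_prime_pred[OF p] coprime_dvd_mult_right_iff by blast
  hence "e \<le> m - 1" using power_dvd_imp_le p1 by blast
  then obtain d where d: "m - 1 = d + e" by (metis le_add_diff_inverse2)
  have "r * p ^ e = (p - 1) * p ^ (m - 1)" using eq tot by simp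
  also have "\<dots> = ((p - 1) * p ^ d) * p ^ e" unfolding d by (simp add: power_add)
  finally have "r * p ^ e = ((p - 1) * p ^ d) * p ^ e" .
  hence "r = (p - 1) * p ^ d" using p1 by simp
  moreover have "m - e = Suc d" using d m by simp
  ultimately show ?thesis
    using totient_prime_power_Suc[OF p, of d] by simp
qed

text \<open>If r \<cdot> p^e is a sum of \<phi>(p^(n-k)) over at least two indices k < n, then r does
  not divide \<phi>(p^n): after factoring out the smallest summand the cofactor is
  congruent to 1 mod p and exceeds 1, so it cannot divide a power of p.\<close>

lemma layer_sum_not_dvd_totient:
  fixes p n r e :: nat
  assumes p: "prime p" and fin: "finite T" and T: "T \<subseteq> {..<n}"
    and i: "i \<in> T" and j: "j \<in> T" and ij: "i \<noteq> j"
    and eq: "r * p ^ e = (\<Sum>k\<in>T. totient (p ^ (n - k)))"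
  shows "\<not> r dvd totient (p ^ n)"
proof
  assume dvd: "r dvd totient (p ^ n)"
  have p1: "p > 1" using p prime_gt_1_nat by blast
  define top where "top = Max T"
  have top: "top \<in> T" "top < n" using fin i T unfolding top_def by (auto intro: Max_in)
  have le_top: "k \<le> top" if "k \<in> T" for k using fin that unfolding top_def by simp
  define base where "base = (p - 1) * p ^ (n - 1 - top)"
  define Y where "Y = (\<Sum>k\<in>T. p ^ (top - k))"
  have sum_eq: "(\<Sum>k\<in>T. totient (p ^ (n - k))) = base * Y"
  proof -
    have "totient (p ^ (n - k)) = base * p ^ (top - k)" if "k \<in> T" for k
    proof -
      have k: "k < n" using T that by blast
      have split: "n - 1 - k = (n - 1 - top) + (top - k)" using le_top[OF that] top by simp
      have "totient (p ^ (n - k)) = p ^ (n - 1 - k) * (p - 1)"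
        using totient_prime_power[OF p, of "n - k"] k by simp
      also have "\<dots> = base * p ^ (top - k)"
        unfolding split base_def by (simp add: power_add)
      finally show ?thesis .
    qed
    thus ?thesis unfolding Y_def sum_distrib_left by simp
  qed
  obtain t where Yt: "Y = 1 + p * t" and t: "t > 0"
  proof -
    have "Y = 1 + (\<Sum>k\<in>T - {top}. p ^ (top - k))"
      unfolding Y_def using sum.remove[OF fin top(1), of "\<lambda>k. p ^ (top - k)"] by simp
    moreover have "p dvd (\<Sum>k\<in>T - {top}. p ^ (top - k))"
    proof (rule dvd_sum)
      fix k assume "k \<in> T - {top}"
      hence "top - k \<noteq> 0" using le_top by force
      thus "p dvd p ^ (top - k)" by simp
    qed
    moreover have "(\<Sum>k\<in>T - {top}. p ^ (top - k)) > 0"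
    proof -
      have "{i, j} - {top} \<noteq> {}" using ij by blast
      then obtain k where "k \<in> T - {top}" using i j by blast
      thus ?thesis using fin p1 by (intro sum_pos2[of _ k]) auto
    qed
    ultimately show ?thesis using that by (auto simp: dvd_def)
  qed
  have base_pos: "base > 0" using p1 unfolding base_def by simp
  have tot: "totient (p ^ n) = base * p ^ top"
    using totient_prime_power[OF p, of n] top unfolding base_def
    by (simp add: power_add[symmetric])
  obtain c where c: "totient (p ^ n) = r * c" using dvd by blast
  have "base * (Y * c) = (r * p ^ e) * c" using eq sum_eq by simp
  also have "\<dots> = totient (p ^ n) * p ^ e" using c by simp
  also have "\<dots> = base * p ^ (top + e)" using tot by (simp add: power_add)
  finally have "base * (Y * c) = base * p ^ (top + e)" .
  hence "Y * c = p ^ (top + e)" using base_pos by simp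
  hence "Y dvd p ^ (top + e)" by (metis dvd_triv_left)
  moreover have "coprime Y (p ^ (top + e))" using coprime_one_plus_mult Yt by simp
  ultimately have "is_unit Y" using coprime_absorb_left by blast
  thus False using Yt t p1 by simp
qed

locale unital_part =
  fixes N :: nat and P :: "nat set set"
  assumes N_gt_1: "N > 1" and unital: "unital_partition N P"
begin

lemma zero_block: "{0} \<in> P"
  using unital by (simp add: unital_partition_def)

lemma block_props: "A \<in> P \<Longrightarrow> A \<noteq> {} \<and> A \<subseteq> {..<N}"
  using unital by (simp add: unital_partition_def grp_def lessThan_atLeast0)

lemma block_subset: "A \<in> P \<Longrightarrow> A \<subseteq> {..<N}"
  using block_props by blast

lemma block_nonempty: "A \<in> P \<Longrightarrow> A \<noteq> {}"
  using block_props by blast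

lemma block_cover: "x < N \<Longrightarrow> \<exists>B\<in>P. x \<in> B"
proof -
  assume "x < N"
  moreover have "\<Union>P = {..<N}"
    using unital by (simp add: unital_partition_def grp_def lessThan_atLeast0)
  ultimately show ?thesis by blast
qed

lemma blocks_disjoint: "A \<in> P \<Longrightarrow> B \<in> P \<Longrightarrow> A \<noteq> B \<Longrightarrow> A \<inter> B = {}"
  using unital by (simp add: unital_partition_def)

lemma block_unique: "A \<in> P \<Longrightarrow> B \<in> P \<Longrightarrow> x \<in> A \<Longrightarrow> x \<in> B \<Longrightarrow> A = B"
  using blocks_disjoint by blast

lemma finite_partition: "finite P"
  by (rule finite_subset[of _ "Pow {..<N}"]) (auto dest: block_subset)

lemma finite_block: "A \<in> P \<Longrightarrow> finite A"
  using block_subset finite_subset by blast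

abbreviation span :: "(nat \<Rightarrow> int) set" where
  "span \<equiv> zspan (ind ` P)"

lemma ind_in_span: "B \<in> P \<Longrightarrow> ind B \<in> span"
proof -
  assume B: "B \<in> P"
  have "(\<lambda>x. \<Sum>v\<in>ind ` P. (if v = ind B then 1 else 0) * v x)
      = (\<lambda>x. \<Sum>v\<in>ind ` P. if v = ind B then v x else 0)"
    by (intro ext sum.cong) auto
  also have "\<dots> = ind B"
    using finite_partition B by simp
  finally show ?thesis unfolding zspan_def by (intro CollectI exI) (rule sym)
qed

lemma span_mult: "f \<in> span \<Longrightarrow> g \<in> span \<Longrightarrow> gr_mult N f g \<in> span"
  using unital by (simp add: unital_partition_def)

lemma ind_eq_iff: "ind A = ind B \<longleftrightarrow> A = B"
proof
  assume "ind A = ind B"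
  hence "x \<in> A \<longleftrightarrow> x \<in> B" for x
    unfolding ind_def fun_eq_iff by (metis one_neq_zero)
  thus "A = B" by blast
qed simp

lemma ind_block_at:
  assumes B: "B \<in> P" and v: "v \<in> ind ` P" and z: "z \<in> B"
  shows "v z = (if v = ind B then 1 else 0)"
proof -
  obtain B' where B': "B' \<in> P" "v = ind B'" using v by blast
  show ?thesis
  proof (cases "z \<in> B'")
    case True
    hence "B' = B" using block_unique B B' z by blast
    thus ?thesis using B' z by (simp add: ind_def)
  next
    case False
    hence "B' \<noteq> B" using z by blast
    hence "v \<noteq> ind B" using B' ind_eq_iff by simp
    moreover have "v z = 0" using B' False by (simp add: ind_def)
    ultimately show ?thesis by simp
  qed
qed

lemma span_constant_on_block:
  assumes f: "f \<in> span" and B: "B \<in> P" and x: "x \<in> B" and y: "y \<in> B"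
  shows "f x = f y"
proof -
  obtain c where c: "f = (\<lambda>x. \<Sum>v\<in>ind ` P. c v * v x)"
    using f unfolding zspan_def by blast
  have "f z = c (ind B)" if "z \<in> B" for z
  proof -
    have "f z = (\<Sum>v\<in>ind ` P. c v * (if v = ind B then 1 else 0))"
      unfolding c using ind_block_at[OF B _ that] by (intro sum.cong) simp_all
    also have "\<dots> = c (ind B)"
      using finite_partition B by (simp add: if_distrib cong: if_cong)
    finally show ?thesis .
  qed
  thus ?thesis using x y by simp
qed

fun block_power :: "nat set \<Rightarrow> nat \<Rightarrow> nat \<Rightarrow> int" where
  "block_power A 0 = ind {0}"
| "block_power A (Suc m) = gr_mult N (ind A) (block_power A m)"

lemma block_power_in_span: "A \<in> P \<Longrightarrow> block_power A m \<in> span"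
  by (induction m) (auto intro: span_mult ind_in_span zero_block)

definition tuples :: "nat set \<Rightarrow> nat \<Rightarrow> nat \<Rightarrow> nat list set" where
  "tuples A m z = {xs. length xs = m \<and> set xs \<subseteq> A \<and> sum_list xs mod N = z}"

lemma finite_tuples: "finite A \<Longrightarrow> finite (tuples A m z)"
  unfolding tuples_def
  by (rule finite_subset[OF _ finite_lists_length_eq[of A m]]) auto

lemma mod_add_eq_iff_mod_sub:
  assumes "y < N" "z < N"
  shows "(y + s) mod N = z \<longleftrightarrow> s mod N = (z + N - y) mod N"
proof -
  have "[y + (z + N - y) = z] (mod N)"
    using assms by (simp add: cong_def)
  hence "[y + s = z] (mod N) \<longleftrightarrow> [y + s = y + (z + N - y)] (mod N)"
    by (meson cong_sym cong_trans)
  also have "\<dots> \<longleftrightarrow> [s = z + N - y] (mod N)" by (rule cong_add_lcancel_nat)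
  finally show ?thesis using assms by (simp add: cong_def)
qed

lemma tuples_Suc:
  assumes A: "A \<subseteq> {..<N}" and z: "z < N"
  shows "tuples A (Suc m) z = (\<Union>y\<in>A. (#) y ` tuples A m ((z + N - y) mod N))"
proof (rule Set.set_eqI)
  fix ys
  show "ys \<in> tuples A (Suc m) z \<longleftrightarrow> ys \<in> (\<Union>y\<in>A. (#) y ` tuples A m ((z + N - y) mod N))"
  proof (cases ys)
    case (Cons y xs)
    show ?thesis
    proof (cases "y \<in> A")
      case True
      hence "y < N" using A by auto
      thus ?thesis using True Cons mod_add_eq_iff_mod_sub[OF _ z] unfolding tuples_def by auto
    qed (use Cons in \<open>auto simp: tuples_def\<close>)
  qed (auto simp: tuples_def)
qed

lemma block_power_counts_tuples:
  assumes A: "A \<in> P" and z: "z < N"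
  shows "block_power A m z = int (card (tuples A m z))"
  using z
proof (induction m arbitrary: z)
  case 0
  have "tuples A 0 z = (if z = 0 then {[]} else {})" unfolding tuples_def by auto
  then show ?case by (simp add: ind_def)
next
  case (Suc m)
  have Asub: "A \<subseteq> {..<N}" and Afin: "finite A" using A block_subset finite_block by auto
  have "block_power A (Suc m) z = (\<Sum>y<N. ind A y * block_power A m ((z + N - y) mod N))"
    using Suc.prems by (simp add: gr_mult_def)
  also have "\<dots> = (\<Sum>y<N. if y \<in> A then block_power A m ((z + N - y) mod N) else 0)"
    by (intro sum.cong) (auto simp: ind_def)
  also have "\<dots> = (\<Sum>y\<in>{..<N} \<inter> A. block_power A m ((z + N - y) mod N))"
    by (simp add: sum.inter_restrict)
  also have "\<dots> = (\<Sum>y\<in>A. block_power A m ((z + N - y) mod N))"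
    using Asub by (simp add: Int_absorb1)
  also have "\<dots> = (\<Sum>y\<in>A. int (card (tuples A m ((z + N - y) mod N))))"
    using N_gt_1 by (intro sum.cong refl Suc.IH) simp
  also have "\<dots> = int (card (\<Union>y\<in>A. (#) y ` tuples A m ((z + N - y) mod N)))"
    by (subst card_UN_disjoint) (auto simp: Afin finite_tuples finite_block A card_image)
  also have "\<dots> = int (card (tuples A (Suc m) z))"
    using tuples_Suc[OF Asub Suc.prems] by simp
  finally show ?case .
qed

text \<open>Multiplying a set of residues by m, i.e. the image of a subset of G under
  the power map x \<mapsto> x^m.\<close>

definition scale :: "nat \<Rightarrow> nat set \<Rightarrow> nat set" where
  "scale m X = (\<lambda>x. m * x mod N) ` X"

lemma scale_subset: "scale m X \<subseteq> {..<N}"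
  using N_gt_1 unfolding scale_def by auto

lemma scale_mult: "scale (a * b) X = scale a (scale b X)"
  unfolding scale_def image_image by (intro image_cong refl) (simp add: mod_mult_right_eq mult.assoc)

lemma scale_cong_one:
  assumes "[c = 1] (mod N)" and X: "X \<subseteq> {..<N}"
  shows "scale c X = X"
proof -
  have "c * x mod N = x" if "x \<in> X" for x
    using that X cong_scalar_right[OF assms(1), of x] by (auto simp: cong_def)
  thus ?thesis unfolding scale_def by force
qed

lemma inj_on_scale_unit:
  assumes "coprime m N"
  shows "inj_on (\<lambda>x. m * x mod N) {..<N}"
proof (rule inj_onI)
  fix x y assume "x \<in> {..<N}" "y \<in> {..<N}" "m * x mod N = m * y mod N"
  thus "x = y" using cong_mult_lcancel_nat[OF assms] by (simp add: cong_def)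
qed

lemma card_scale_unit: "coprime m N \<Longrightarrow> X \<subseteq> {..<N} \<Longrightarrow> card (scale m X) = card X"
  unfolding scale_def by (rule card_image) (use inj_on_scale_unit inj_on_subset in blast)

text \<open>The q-tuples counted by the coefficient
  are permuted by rotation, and only the constant tuples are fixed.\<close>

lemma block_power_prime_mod:
  assumes q: "prime q" "coprime q N" and A: "A \<in> P" and z: "z < N"
  shows "block_power A q z mod int q = (if z \<in> scale q A then 1 else 0)"
proof -
  have Asub: "A \<subseteq> {..<N}" using A block_subset by blast
  have q1: "q > 1" using q prime_gt_1_nat by blast
  define Z where "Z = {x\<in>A. q * x mod N = z}"
  have "card (tuples A q z) mod q = card {xs\<in>tuples A q z. rotate1 xs = xs} mod q"
    by (rule necklace_congruence[OF q(1) finite_tuples[OF finite_block[OF A]]])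
      (auto simp: tuples_def sum_list_rotate1)
  also have "{xs\<in>tuples A q z. rotate1 xs = xs} = (\<lambda>x. replicate q x) ` Z"
  proof (rule Set.set_eqI)
    fix xs
    show "xs \<in> {xs\<in>tuples A q z. rotate1 xs = xs} \<longleftrightarrow> xs \<in> (\<lambda>x. replicate q x) ` Z"
    proof
      assume "xs \<in> {xs\<in>tuples A q z. rotate1 xs = xs}"
      hence len: "length xs = q" and set: "set xs \<subseteq> A" and sum: "sum_list xs mod N = z"
        and rot: "rotate1 xs = xs" by (auto simp: tuples_def)
      have rep: "xs = replicate q (hd xs)" using rotate1_fixed_replicate[OF rot] len by simp
      have "hd xs \<in> A" using set len q1 by (cases xs) auto
      moreover have "sum_list xs = q * hd xs" by (subst rep) (simp add: sum_list_replicate)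
      ultimately have "hd xs \<in> Z" using sum unfolding Z_def by simp
      thus "xs \<in> (\<lambda>x. replicate q x) ` Z" using rep by blast
    qed (auto simp: tuples_def Z_def sum_list_replicate)
  qed
  also have "card ((\<lambda>x. replicate q x) ` Z) = card Z"
    using q1 by (intro card_image) (auto simp: inj_on_def)
  also have "card Z = (if z \<in> scale q A then 1 else 0)"
  proof (cases "z \<in> scale q A")
    case True
    then obtain x where x: "x \<in> A" "q * x mod N = z" unfolding scale_def by blast
    have "Z = {x}"
    proof
      show "Z \<subseteq> {x}"
        using x Asub inj_onD[OF inj_on_scale_unit[OF q(2)]] unfolding Z_def by blast
    qed (use x in \<open>simp add: Z_def\<close>)
    thus ?thesis using True by simp
  next
    case False
    hence "Z = {}" unfolding Z_def scale_def by blast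
    thus ?thesis using False by simp
  qed
  finally have "card (tuples A q z) mod q = (if z \<in> scale q A then 1 else 0)"
    using q1 by auto
  thus ?thesis
    using block_power_counts_tuples[OF A z] by (simp add: zmod_int[symmetric] of_nat_mod)
qed

definition union_of_blocks :: "nat set \<Rightarrow> bool" where
  "union_of_blocks X \<longleftrightarrow> X \<subseteq> {..<N} \<and> (\<forall>y\<in>X. \<exists>B\<in>P. y \<in> B \<and> B \<subseteq> X)"

lemma union_of_blocks_block: "B \<in> P \<Longrightarrow> union_of_blocks B"
  unfolding union_of_blocks_def using block_subset by blast

text \<open>Since the q-th power of a block sum lies in the span, it is constant on blocks;
  by the Frobenius congruence so is the indicator of q \<cdot> A.\<close>

lemma scale_prime_block:
  assumes q: "prime q" "coprime q N" and A: "A \<in> P"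
  shows "union_of_blocks (scale q A)"
  unfolding union_of_blocks_def
proof (intro conjI ballI)
  show "scale q A \<subseteq> {..<N}" by (rule scale_subset)
  fix y assume y: "y \<in> scale q A"
  hence "y < N" using scale_subset by blast
  then obtain B where B: "B \<in> P" "y \<in> B" using block_cover by blast
  have "B \<subseteq> scale q A"
  proof
    fix z assume z: "z \<in> B"
    hence "z < N" using B block_subset by blast
    have "block_power A q z = block_power A q y"
      using span_constant_on_block[OF block_power_in_span[OF A] B(1) z B(2)] .
    thus "z \<in> scale q A"
      using block_power_prime_mod[OF q A \<open>z < N\<close>] block_power_prime_mod[OF q A \<open>y < N\<close>] y
      by (auto split: if_splits)
  qed
  thus "\<exists>B\<in>P. y \<in> B \<and> B \<subseteq> scale q A" using B by blast
qed

lemma scale_prime_union_of_blocks: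
  assumes q: "prime q" "coprime q N" and X: "union_of_blocks X"
  shows "union_of_blocks (scale q X)"
  unfolding union_of_blocks_def
proof (intro conjI ballI)
  show "scale q X \<subseteq> {..<N}" by (rule scale_subset)
  fix y assume "y \<in> scale q X"
  then obtain x where x: "x \<in> X" "y = q * x mod N" unfolding scale_def by blast
  obtain B where B: "B \<in> P" "x \<in> B" "B \<subseteq> X" using X x unfolding union_of_blocks_def by blast
  have "y \<in> scale q B" using x B unfolding scale_def by blast
  then obtain C where "C \<in> P" "y \<in> C" "C \<subseteq> scale q B"
    using scale_prime_block[OF q B(1)] unfolding union_of_blocks_def by blast
  moreover have "scale q B \<subseteq> scale q X" using B unfolding scale_def by blast
  ultimately show "\<exists>C\<in>P. y \<in> C \<and> C \<subseteq> scale q X" by blast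
qed

lemma scale_unit_union_of_blocks:
  "coprime m N \<Longrightarrow> union_of_blocks X \<Longrightarrow> union_of_blocks (scale m X)"
proof (induction m rule: prime_divisors_induct)
  case zero
  thus ?case using N_gt_1 by simp
next
  case (unit m)
  hence "scale m X = X"
    using scale_cong_one[of m X] unfolding union_of_blocks_def by simp
  thus ?case using unit by simp
next
  case (factor q m)
  thus ?case using scale_prime_union_of_blocks by (simp add: scale_mult)
qed

text \<open>The image of A is a union of blocks, and so is the image of the block B
  meeting it under the inverse unit; the two inclusions force equality.\<close>

theorem scale_unit_block:
  assumes m: "coprime m N" and A: "A \<in> P"
  shows "scale m A \<in> P"
proof -
  obtain m' where inv: "[m * m' = 1] (mod N)" and m': "coprime m' N"
    using unit_inverse[OF m] by blast
  have undo: "scale m' (scale m X) = X" "scale m (scale m' X) = X" if "X \<subseteq> {..<N}" for X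
    using scale_cong_one[OF inv that] inv scale_cong_one[of "m' * m" X] that
    by (simp_all add: scale_mult[symmetric] mult.commute)
  obtain a where a: "a \<in> A" using block_nonempty[OF A] by blast
  hence "m * a mod N \<in> scale m A" unfolding scale_def by blast
  then obtain B where B: "B \<in> P" "m * a mod N \<in> B" "B \<subseteq> scale m A"
    using scale_unit_union_of_blocks[OF m union_of_blocks_block[OF A]]
    unfolding union_of_blocks_def by blast
  have "scale m' B \<subseteq> scale m' (scale m A)" using B(3) unfolding scale_def by blast
  hence sub: "scale m' B \<subseteq> A" using undo(1) block_subset[OF A] by simp
  have "a \<in> scale m' B"
  proof -
    have "a \<in> scale m' (scale m {a})" using undo(1)[of "{a}"] a block_subset[OF A] by auto
    thus ?thesis using B(2) unfolding scale_def by auto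
  qed
  then obtain C where "C \<in> P" "a \<in> C" "C \<subseteq> scale m' B"
    using scale_unit_union_of_blocks[OF m' union_of_blocks_block[OF B(1)]]
    unfolding union_of_blocks_def by blast
  hence "A \<subseteq> scale m' B" using block_unique[OF _ A _ a] by blast
  hence "scale m' B = A" using sub by blast
  hence "scale m A = B" using undo(2) block_subset[OF B(1)] by metis
  thus ?thesis using B(1) by simp
qed

end

locale prime_power_cyclic =
  fixes p n :: nat
  assumes prime_p: "prime p" and n_pos: "n \<ge> 1"
begin

abbreviation layer :: "nat \<Rightarrow> nat set" where
  "layer k \<equiv> Bset p (p ^ n) k"

lemma p_gt_1: "p > 1"
  using prime_p prime_gt_1_nat by blast

lemma order_gt_1: "p ^ n > 1"
  using one_less_power[OF p_gt_1] n_pos by simp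

lemma power_split: "k \<le> n \<Longrightarrow> p ^ n = p ^ k * p ^ (n - k)"
  by (simp add: power_add[symmetric])

lemma gcd_layer_elem:
  assumes "k \<le> n" "coprime h p"
  shows "gcd (p ^ k * h) (p ^ n) = p ^ k"
proof -
  have "gcd (p ^ k * h) (p ^ n) = p ^ k * gcd h (p ^ (n - k))"
    by (simp add: power_split[OF assms(1)] gcd_mult_distrib_nat)
  also have "gcd h (p ^ (n - k)) = 1" using assms(2) by simp
  finally show ?thesis by simp
qed

lemma gcd_power_cofactor:
  assumes k: "k < n" and x: "gcd x (p ^ n) = p ^ k"
  obtains h where "x = p ^ k * h" and "coprime h p"
proof -
  have "p ^ k dvd x" using x by (metis gcd_dvd1)
  then obtain h where hx: "x = p ^ k * h" by (elim dvdE)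
  have "coprime h p"
  proof (rule ccontr)
    assume "\<not> coprime h p"
    hence "p dvd h" using prime_imp_coprime_nat[OF prime_p] coprime_commute by blast
    hence "p ^ Suc k dvd x" unfolding hx by (simp add: mult_dvd_mono)
    moreover have "p ^ Suc k dvd p ^ n" using k by (intro le_imp_power_dvd) simp
    ultimately have "p ^ Suc k dvd p ^ k" using x by (metis gcd_greatest)
    hence "Suc k \<le> k" by (rule power_dvd_imp_le[OF _ p_gt_1])
    thus False by simp
  qed
  thus ?thesis using hx that by blast
qed

lemma layer_char:
  assumes k: "k \<le> n"
  shows "layer k = {x. x < p ^ n \<and> gcd x (p ^ n) = p ^ k}"
proof (rule Set.set_eqI, rule iffI)
  fix x assume "x \<in> layer k"
  then obtain h where h: "coprime h (p ^ n)" "x = p ^ k * h mod p ^ n"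
    unfolding Bset_def generators_def by blast
  have "coprime h p" using h(1) n_pos by simp
  have "gcd x (p ^ n) = gcd (p ^ k * h) (p ^ n)" using h(2) p_gt_1 by simp
  hence "gcd x (p ^ n) = p ^ k" using gcd_layer_elem[OF k \<open>coprime h p\<close>] by simp
  thus "x \<in> {x. x < p ^ n \<and> gcd x (p ^ n) = p ^ k}" using h(2) p_gt_1 by simp
next
  fix x assume "x \<in> {x. x < p ^ n \<and> gcd x (p ^ n) = p ^ k}"
  hence x: "x < p ^ n" "gcd x (p ^ n) = p ^ k" by auto
  have "\<exists>h. h < p ^ n \<and> coprime h (p ^ n) \<and> x = p ^ k * h mod p ^ n"
  proof (cases "k = n")
    case True
    hence "p ^ n dvd x" using x(2) by (metis gcd_dvd1)
    hence "x = 0" using x(1) by (metis dvd_imp_le not_less neq0_conv)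
    thus ?thesis using True order_gt_1 by (intro exI[of _ 1]) simp
  next
    case False
    then obtain h where hx: "x = p ^ k * h" and "coprime h p"
      using gcd_power_cofactor[of k x] k x(2) by auto
    moreover have "h \<le> x" unfolding hx using p_gt_1 by simp
    hence "h < p ^ n" using x(1) by linarith
    ultimately show ?thesis using x(1) n_pos by (intro exI[of _ h]) simp
  qed
  thus "x \<in> layer k" unfolding Bset_def generators_def grp_def by auto
qed

lemma in_some_layer: "x < p ^ n \<Longrightarrow> \<exists>k\<le>n. x \<in> layer k"
proof -
  assume x: "x < p ^ n"
  have "gcd x (p ^ n) dvd p ^ n" by simp
  then obtain k where "k \<le> n" "gcd x (p ^ n) = p ^ k"
    using divides_primepow_nat[OF prime_p] by blast
  thus ?thesis using x layer_char by blast
qed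

lemma layer_unique: "i \<le> n \<Longrightarrow> j \<le> n \<Longrightarrow> x \<in> layer i \<Longrightarrow> x \<in> layer j \<Longrightarrow> i = j"
  using layer_char p_gt_1 by simp

lemma layer_subset: "k \<le> n \<Longrightarrow> layer k \<subseteq> {..<p ^ n}"
  using layer_char by auto

lemma top_layer: "layer n = {0}"
proof -
  have "x = 0" if "x < p ^ n" "gcd x (p ^ n) = p ^ n" for x
    using that by (metis gcd_dvd1 dvd_imp_le not_less neq0_conv)
  thus ?thesis using layer_char[of n] order_gt_1 by auto
qed

lemma layer_scale_unit:
  assumes k: "k \<le> n" and x: "x \<in> layer k" and w: "coprime w (p ^ n)"
  shows "w * x mod p ^ n \<in> layer k"
proof -
  have "gcd (w * x mod p ^ n) (p ^ n) = gcd (w * x) (p ^ n)" using p_gt_1 by simp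
  also have "\<dots> = gcd x (p ^ n)"
    by (rule gcd_mult_left_left_cancel[OF coprime_commute[THEN iffD1, OF w]])
  finally have "gcd (w * x mod p ^ n) (p ^ n) = p ^ k" using x layer_char[OF k] by simp
  moreover have "w * x mod p ^ n < p ^ n" using p_gt_1 by simp
  ultimately show ?thesis using layer_char[OF k] by simp
qed

lemma layer_transitive:
  assumes x: "x \<in> layer k" and y: "y \<in> layer k"
  shows "\<exists>w. coprime w (p ^ n) \<and> y = w * x mod p ^ n"
proof -
  obtain h h' where h: "coprime h (p ^ n)" "x = p ^ k * h mod p ^ n"
    and h': "coprime h' (p ^ n)" "y = p ^ k * h' mod p ^ n"
    using x y unfolding Bset_def generators_def by blast
  obtain h_inv where inv: "[h * h_inv = 1] (mod p ^ n)" and "coprime h_inv (p ^ n)"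
    using unit_inverse[OF h(1)] by blast
  hence "coprime (h' * h_inv) (p ^ n)" using h'(1) by (simp only: coprime_mult_left_iff)
  moreover have "[h' * h_inv * (p ^ k * h) = p ^ k * h'] (mod p ^ n)"
    using cong_scalar_left[OF inv, of "p ^ k * h'"] by (simp add: ac_simps)
  hence "y = h' * h_inv * x mod p ^ n"
    using h(2) h'(2) by (simp add: cong_def mod_mult_right_eq)
  ultimately show ?thesis by blast
qed

lemma card_layer:
  assumes k: "k < n"
  shows "card (layer k) = totient (p ^ (n - k))"
proof -
  have ne: "p ^ k \<noteq> p ^ n" using k p_gt_1 by simp
  have "(x < p ^ n \<and> gcd x (p ^ n) = p ^ k) \<longleftrightarrow>
      (0 < x \<and> x \<le> p ^ n \<and> gcd x (p ^ n) = p ^ k)" for x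
    using ne by (cases "x = 0"; cases "x = p ^ n") auto
  hence "layer k = {x\<in>{0<..p ^ n}. gcd x (p ^ n) = p ^ k}"
    using layer_char[of k] k by auto
  hence "card (layer k) = card {x\<in>{0<..p ^ n}. gcd x (p ^ n) = p ^ k}" by simp
  also have "\<dots> = totient (p ^ n div p ^ k)"
    using k p_gt_1 by (intro card_gcd_eq_totient) (simp_all add: le_imp_power_dvd)
  also have "p ^ n div p ^ k = p ^ (n - k)"
    using k p_gt_1 by (simp add: power_diff)
  finally show ?thesis .
qed

end

locale unital_prime_power = unital_part "p ^ n" P + prime_power_cyclic p n
  for p n :: nat and P :: "nat set set" +
  fixes \<alpha> :: nat
  assumes block_card: "\<forall>A\<in>P. \<exists>e. card A = p ^ e"
    and primroot: "residue_primroot (p ^ n) \<alpha>"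
begin

lemma alpha_coprime: "coprime (\<alpha> ^ i) (p ^ n)"
proof -
  have "coprime (p ^ n) \<alpha>" using primroot unfolding residue_primroot_def by blast
  hence "coprime (p ^ n) (\<alpha> ^ i)" by simp
  thus ?thesis by (rule coprime_commute[THEN iffD1])
qed

lemma scale_alpha_block: "A \<in> P \<Longrightarrow> scale (\<alpha> ^ i) A \<in> P"
  using scale_unit_block[OF alpha_coprime] .

lemma scale_alpha_add: "scale (\<alpha> ^ i) (scale (\<alpha> ^ j) X) = scale (\<alpha> ^ (i + j)) X"
  by (simp add: scale_mult[symmetric] power_add)

lemma scale_cancel_one: "[c = 1] (mod p ^ n) \<Longrightarrow> scale (c * d) X = scale d X"
  using scale_cong_one[OF _ scale_subset] by (simp add: scale_mult)

lemma unit_is_alpha_power: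
  assumes w: "coprime w (p ^ n)"
  obtains i where "[w = \<alpha> ^ i] (mod p ^ n)"
proof -
  have "w mod p ^ n \<in> totatives (p ^ n)"
  proof -
    have "w mod p ^ n \<noteq> 0"
    proof
      assume "w mod p ^ n = 0"
      hence "p ^ n dvd w" by (simp add: mod_eq_0_iff_dvd)
      hence "is_unit (p ^ n)" using w coprime_absorb_right by blast
      hence "p ^ n = 1" by (simp only: nat_dvd_1_iff_1)
      thus False using order_gt_1 by linarith
    qed
    moreover have "coprime (w mod p ^ n) (p ^ n)"
      using coprime_mod_left_iff[of "p ^ n" w] w order_gt_1 by linarith
    moreover have "w mod p ^ n \<le> p ^ n"
      using order_gt_1 by (intro less_imp_le mod_less_divisor) linarith
    ultimately show ?thesis unfolding in_totatives_iff by blast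
  qed
  then obtain i where "w mod p ^ n = \<alpha> ^ i mod p ^ n"
    using residue_primroot_is_generator[OF order_gt_1 primroot] unfolding bij_betw_def by auto
  thus ?thesis using that unfolding cong_def by blast
qed

lemma layer_alpha_transitive:
  assumes "x \<in> layer k" and "y \<in> layer k"
  obtains i where "y = \<alpha> ^ i * x mod p ^ n"
proof -
  obtain w where w: "coprime w (p ^ n)" "y = w * x mod p ^ n"
    using layer_transitive[OF assms] by blast
  obtain i where "[w = \<alpha> ^ i] (mod p ^ n)" using unit_is_alpha_power[OF w(1)] by blast
  hence "y = \<alpha> ^ i * x mod p ^ n" using w(2) unfolding cong_def by (metis mod_mult_left_eq)
  thus ?thesis using that by blast
qed

definition period :: "nat set \<Rightarrow> nat" where
  "period A = (LEAST s. 0 < s \<and> scale (\<alpha> ^ s) A = A)"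

lemma scale_alpha_totient: "A \<in> P \<Longrightarrow> scale (\<alpha> ^ totient (p ^ n)) A = A"
  using scale_cong_one[OF euler_theorem[OF alpha_coprime[of 1]] block_subset] by simp

lemma period:
  assumes A: "A \<in> P"
  shows "0 < period A" and "scale (\<alpha> ^ period A) A = A"
proof -
  have "0 < totient (p ^ n) \<and> scale (\<alpha> ^ totient (p ^ n)) A = A"
    using scale_alpha_totient[OF A] p_gt_1 by simp
  hence "0 < period A \<and> scale (\<alpha> ^ period A) A = A"
    unfolding period_def by (rule LeastI)
  thus "0 < period A" "scale (\<alpha> ^ period A) A = A" by auto
qed

lemma period_least: "0 < s \<Longrightarrow> s < period A \<Longrightarrow> scale (\<alpha> ^ s) A \<noteq> A"
  unfolding period_def using not_less_Least by blast

lemma scale_alpha_mod_period: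
  assumes A: "A \<in> P"
  shows "scale (\<alpha> ^ i) A = scale (\<alpha> ^ (i mod period A)) A"
proof -
  have multiple: "scale (\<alpha> ^ (period A * t)) A = A" for t
  proof (induction t)
    case 0
    thus ?case using scale_cong_one[OF cong_refl block_subset[OF A]] by simp
  next
    case (Suc t)
    thus ?case using scale_alpha_add[of "period A" "period A * t" A] period(2)[OF A] by simp
  qed
  have "scale (\<alpha> ^ i) A = scale (\<alpha> ^ (i mod period A)) (scale (\<alpha> ^ (period A * (i div period A))) A)"
    by (simp add: scale_alpha_add)
  thus ?thesis using multiple by simp
qed

lemma period_dvd_totient:
  assumes A: "A \<in> P"
  shows "period A dvd totient (p ^ n)"
proof -
  have "scale (\<alpha> ^ (totient (p ^ n) mod period A)) A = A"
    using scale_alpha_mod_period[OF A] scale_alpha_totient[OF A] by simp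
  moreover have "totient (p ^ n) mod period A < period A" using period(1)[OF A] by simp
  ultimately have "totient (p ^ n) mod period A = 0" using period_least by blast
  thus ?thesis by (simp add: mod_eq_0_iff_dvd)
qed

lemma scale_alpha_distinct:
  assumes A: "A \<in> P" and ij: "i < j" "j < period A"
  shows "scale (\<alpha> ^ i) A \<noteq> scale (\<alpha> ^ j) A"
proof
  assume eq: "scale (\<alpha> ^ i) A = scale (\<alpha> ^ j) A"
  obtain \<beta> where inv: "[\<beta> * \<alpha> ^ i = 1] (mod p ^ n)"
    using unit_inverse[OF alpha_coprime[of i]] by (metis mult.commute)
  have "scale (\<alpha> ^ (j - i)) A = scale \<beta> (scale (\<alpha> ^ j) A)"
    using scale_cancel_one[OF inv, of "\<alpha> ^ (j - i)"] ij
    by (simp add: scale_mult[symmetric] power_add[symmetric] mult.assoc)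
  also have "\<dots> = scale \<beta> (scale (\<alpha> ^ i) A)" by (simp only: eq)
  also have "\<dots> = A"
    using scale_cancel_one[OF inv, of 1 A] scale_cong_one[OF cong_refl block_subset[OF A]]
    by (simp add: scale_mult[symmetric])
  finally show False using period_least ij by simp
qed

lemma uexp_eq_period:
  assumes A: "A \<in> P" and y: "y \<in> A"
  shows "uexp (p ^ n) \<alpha> A y = period A"
proof -
  have "\<alpha> ^ u * y mod p ^ n \<in> A \<longleftrightarrow> scale (\<alpha> ^ u) A = A" for u
  proof
    assume "\<alpha> ^ u * y mod p ^ n \<in> A"
    moreover have "\<alpha> ^ u * y mod p ^ n \<in> scale (\<alpha> ^ u) A" using y unfolding scale_def by blast
    ultimately show "scale (\<alpha> ^ u) A = A" using block_unique scale_alpha_block A by blast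
  next
    assume "scale (\<alpha> ^ u) A = A"
    thus "\<alpha> ^ u * y mod p ^ n \<in> A" using y unfolding scale_def by blast
  qed
  thus ?thesis unfolding uexp_def period_def by simp
qed

definition orbit :: "nat set \<Rightarrow> nat set" where
  "orbit A = (\<Union>i<period A. scale (\<alpha> ^ i) A)"

lemma card_orbit:
  assumes A: "A \<in> P"
  shows "card (orbit A) = period A * card A"
proof -
  have "card (orbit A) = (\<Sum>i<period A. card (scale (\<alpha> ^ i) A))"
    unfolding orbit_def
  proof (rule card_UN_disjoint)
    show "\<forall>i\<in>{..<period A}. finite (scale (\<alpha> ^ i) A)"
      using finite_block scale_alpha_block A by blast
    show "\<forall>i\<in>{..<period A}. \<forall>j\<in>{..<period A}. i \<noteq> j \<longrightarrow>
        scale (\<alpha> ^ i) A \<inter> scale (\<alpha> ^ j) A = {}"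
      using blocks_disjoint scale_alpha_block[OF A] scale_alpha_distinct[OF A]
      by (metis lessThan_iff nat_neq_iff)
  qed simp
  also have "\<dots> = (\<Sum>i<period A. card A)"
    using card_scale_unit[OF alpha_coprime block_subset[OF A]] by simp
  finally show ?thesis by simp
qed

definition layers_met :: "nat set \<Rightarrow> nat set" where
  "layers_met A = {k. k \<le> n \<and> A \<inter> layer k \<noteq> {}}"

text \<open>Since the units act transitively on each layer and every unit is a power of
  \<alpha>, the orbit of a block is exactly the union of the layers it meets.\<close>

lemma orbit_eq_layers:
  assumes A: "A \<in> P"
  shows "orbit A = (\<Union>k\<in>layers_met A. layer k)"
proof (rule Set.set_eqI, rule iffI)
  fix z assume "z \<in> orbit A"
  then obtain i x where x: "x \<in> A" "z = \<alpha> ^ i * x mod p ^ n"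
    unfolding orbit_def scale_def by blast
  obtain k where k: "k \<le> n" "x \<in> layer k"
    using in_some_layer x block_subset[OF A] by blast
  have "z \<in> layer k" using layer_scale_unit[OF k alpha_coprime] x by simp
  moreover have "k \<in> layers_met A" using k x unfolding layers_met_def by blast
  ultimately show "z \<in> (\<Union>k\<in>layers_met A. layer k)" by blast
next
  fix z assume "z \<in> (\<Union>k\<in>layers_met A. layer k)"
  then obtain k x where z: "z \<in> layer k" and x: "x \<in> A" "x \<in> layer k"
    unfolding layers_met_def by blast
  obtain i where "z = \<alpha> ^ i * x mod p ^ n" using layer_alpha_transitive[OF x(2) z] .
  hence "z \<in> scale (\<alpha> ^ (i mod period A)) A"
    using x(1) scale_alpha_mod_period[OF A, of i] unfolding scale_def by blast
  thus "z \<in> orbit A" using period(1)[OF A] unfolding orbit_def by auto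
qed

text \<open>Counting the orbit of a block other than {1} in two ways.\<close>

lemma orbit_count:
  assumes A: "A \<in> P" and A0: "A \<noteq> {0}"
  shows "layers_met A \<subseteq> {..<n}"
    and "period A * card A = (\<Sum>k\<in>layers_met A. totient (p ^ (n - k)))"
proof -
  show below: "layers_met A \<subseteq> {..<n}"
  proof
    fix k assume k: "k \<in> layers_met A"
    have "k \<noteq> n"
    proof
      assume "k = n"
      hence "A \<inter> layer n \<noteq> {}" using k unfolding layers_met_def by simp
      hence "0 \<in> A" using top_layer by simp
      hence "A = {0}" using block_unique[OF A zero_block] by simp
      thus False using A0 by contradiction
    qed
    thus "k \<in> {..<n}" using k unfolding layers_met_def by simp
  qed
  have "period A * card A = card (\<Union>k\<in>layers_met A. layer k)"
    using card_orbit[OF A] orbit_eq_layers[OF A] by simp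
  also have "\<dots> = (\<Sum>k\<in>layers_met A. card (layer k))"
  proof (rule card_UN_disjoint)
    show "finite (layers_met A)" unfolding layers_met_def by simp
    show "\<forall>k\<in>layers_met A. finite (layer k)"
      using layer_subset finite_subset unfolding layers_met_def by blast
    show "\<forall>i\<in>layers_met A. \<forall>j\<in>layers_met A. i \<noteq> j \<longrightarrow> layer i \<inter> layer j = {}"
    proof (intro ballI impI)
      fix i j assume "i \<in> layers_met A" "j \<in> layers_met A" "i \<noteq> j"
      thus "layer i \<inter> layer j = {}"
        using layer_unique[of i j] unfolding layers_met_def by blast
    qed
  qed
  also have "\<dots> = (\<Sum>k\<in>layers_met A. totient (p ^ (n - k)))"
    using below card_layer by (intro sum.cong) auto
  finally show "period A * card A = (\<Sum>k\<in>layers_met A. totient (p ^ (n - k)))" .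
qed

text \<open>Condition (p) forces every block into a single layer: otherwise the orbit
  count would make the period, a divisor of \<phi>(p^n), equal to a sum over two or
  more layers divided by a power of p.\<close>

lemma block_in_one_layer:
  assumes A: "A \<in> P" and ij: "i \<le> n" "j \<le> n"
    and meets: "A \<inter> layer i \<noteq> {}" "A \<inter> layer j \<noteq> {}"
  shows "i = j"
proof (cases "A = {0}")
  case True
  thus ?thesis using meets layer_unique[OF ij, of 0] by blast
next
  case False
  obtain e where e: "card A = p ^ e" using block_card A by blast
  have "i \<in> layers_met A" "j \<in> layers_met A" using ij meets unfolding layers_met_def by auto
  moreover have "period A * p ^ e = (\<Sum>k\<in>layers_met A. totient (p ^ (n - k)))"
    using orbit_count(2)[OF A False] e by simp
  moreover have "finite (layers_met A)" unfolding layers_met_def by simp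
  ultimately show ?thesis
    using layer_sum_not_dvd_totient[OF prime_p _ orbit_count(1)[OF A False]]
      period_dvd_totient[OF A] by blast
qed

lemma layer_period:
  assumes k: "k < n" and A: "A \<in> P" and meets: "A \<inter> layer k \<noteq> {}"
    and e: "card A = p ^ e"
  shows "e < n - k \<and> period A = totient (p ^ (n - k - e))"
proof -
  have A0: "A \<noteq> {0}"
    using meets top_layer layer_unique[of k n 0] k by auto
  have "layers_met A = {k}"
  proof
    show "layers_met A \<subseteq> {k}"
      using block_in_one_layer[OF A _ _ _ meets, of _] k unfolding layers_met_def by force
    show "{k} \<subseteq> layers_met A" using meets k unfolding layers_met_def by simp
  qed
  hence "period A * p ^ e = totient (p ^ (n - k))"
    using orbit_count(2)[OF A A0] e by simp
  thus ?thesis using totient_prime_power_cofactor[OF prime_p, of "n - k"] k by simp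
qed

text \<open>Two blocks meeting the same layer are images of each other under a power of \<alpha>,
  so they have the same size.\<close>

lemma card_blocks_same_layer:
  assumes A: "A \<in> P" and A': "A' \<in> P"
    and x: "x \<in> A" "x \<in> layer k" and x': "x' \<in> A'" "x' \<in> layer k"
  shows "card A' = card A"
proof -
  obtain i where "x' = \<alpha> ^ i * x mod p ^ n" using layer_alpha_transitive[OF x(2) x'(2)] .
  hence "x' \<in> scale (\<alpha> ^ i) A" using x(1) unfolding scale_def by blast
  hence "A' = scale (\<alpha> ^ i) A" using block_unique[OF A' scale_alpha_block[OF A] x'(1)] by blast
  thus ?thesis using card_scale_unit[OF alpha_coprime block_subset[OF A]] by simp
qed

lemma layer_classes_disjoint:
  "i \<le> n \<Longrightarrow> j \<le> n \<Longrightarrow> i \<noteq> j \<Longrightarrow> Pk p (p ^ n) P i \<inter> Pk p (p ^ n) P j = {}"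
  using block_in_one_layer unfolding Pk_def by blast

lemma layer_classes_cover: "P = (\<Union>k\<le>n. Pk p (p ^ n) P k)"
proof
  show "P \<subseteq> (\<Union>k\<le>n. Pk p (p ^ n) P k)"
  proof
    fix A assume A: "A \<in> P"
    obtain x where x: "x \<in> A" using block_nonempty[OF A] by blast
    then obtain k where "k \<le> n" "x \<in> layer k"
      using in_some_layer block_subset[OF A] by blast
    thus "A \<in> (\<Union>k\<le>n. Pk p (p ^ n) P k)" using A x unfolding Pk_def by blast
  qed
qed (auto simp: Pk_def)

lemma uexp_on_layer:
  assumes k: "k < n"
  shows "\<exists>b. 1 \<le> b \<and> b \<le> n - k \<and>
    (\<forall>A\<in>Pk p (p ^ n) P k. \<forall>y\<in>A \<inter> layer k. uexp (p ^ n) \<alpha> A y = totient (p ^ b))"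
proof (cases "Pk p (p ^ n) P k = {}")
  case True
  thus ?thesis using k by (intro exI[of _ 1]) auto
next
  case False
  then obtain A0 x0 where A0: "A0 \<in> P" "x0 \<in> A0" "x0 \<in> layer k" unfolding Pk_def by blast
  obtain e where e: "card A0 = p ^ e" using block_card A0(1) by blast
  have "e < n - k" using layer_period[OF k A0(1) _ e] A0 by blast
  moreover have "uexp (p ^ n) \<alpha> A y = totient (p ^ (n - k - e))"
    if A: "A \<in> Pk p (p ^ n) P k" and y: "y \<in> A \<inter> layer k" for A y
  proof -
    have AP: "A \<in> P" using A unfolding Pk_def by blast
    have "card A = p ^ e"
      using card_blocks_same_layer[OF A0(1) AP A0(2,3) IntD1[OF y] IntD2[OF y]] e by simp
    hence "period A = totient (p ^ (n - k - e))" using layer_period[OF k AP _] y by blast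
    thus ?thesis using uexp_eq_period[OF AP] y by simp
  qed
  ultimately show ?thesis by (intro exI[of _ "n - k - e"]) auto
qed

end

theorem mainTheorem11:
  fixes p n \<alpha> :: nat and P :: "nat set set"
  assumes "prime p" and "odd p" and "n \<ge> 1"
    and "unital_partition (p ^ n) P"
    and "\<forall>A\<in>P. \<exists>e. card A = p ^ e"
    and "residue_primroot (p ^ n) \<alpha>"
  shows "(\<forall>i\<le>n. \<forall>j\<le>n. i \<noteq> j \<longrightarrow> Pk p (p ^ n) P i \<inter> Pk p (p ^ n) P j = {})
    \<and> P = (\<Union>k\<le>n. Pk p (p ^ n) P k)
    \<and> (\<forall>k<n. \<exists>b. 1 \<le> b \<and> b \<le> n - k \<and>
          (\<forall>A\<in>Pk p (p ^ n) P k. \<forall>y\<in>A \<inter> Bset p (p ^ n) k.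
              uexp (p ^ n) \<alpha> A y = totient (p ^ b)))"
proof -
  have "p ^ n > 1"
    using one_less_power[OF prime_gt_1_nat[OF assms(1)], of n] assms(3) by simp
  then interpret unital_prime_power p n P \<alpha>
    using assms by unfold_locales auto
  show ?thesis using layer_classes_disjoint layer_classes_cover uexp_on_layer by blast
qed

end
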